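(* Let $k\ge 3$ and let $D$ be a digraph on $n$ vertices with $\delta^0(D)\ge\lceil (n+k)/2\rceil-1$. Let $S=(s_1,\dots,s_k)$ be a sequence of distinct vertices of $D$, let $C$ be a longest $S$-cycle in $D$, suppose $C$ is not Hamiltonian, and let $H$ be the subdigraph of $D$ induced by $V(D)\setminus V(C)$. Let $F$ be the set of vertices of $C$ which receive an edge from some vertex of $H$, and $T$ the set of vertices of $C$ which send an edge to some vertex of $H$. Then no vertex of $C$ which lies in $T$ has its successor on $C$ in $F$.
   Context: Digraphs have no loops and at most one edge in each direction between any two vertices; paths and cycles are directed. $\delta^0(D)=\min\{\delta^+(D),\delta^-(D)\}$. An $S$-cycle is a directed cycle in $D$ encountering $s_1,\dots,s_k$ in this order. The successor of $x$ on $C$ is the vertex following $x$ along the direction of $C$. *)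

theory Defs
  imports Complex_Main "HOL-Library.Sublist"
begin

text \<open>A digraph: finite vertex set V, edge relation E with no loops, edges inside V.
  At most one edge in each direction is automatic for a relation.\<close>
definition digraph :: "'a set \<Rightarrow> ('a \<Rightarrow> 'a \<Rightarrow> bool) \<Rightarrow> bool" where
  "digraph V E \<longleftrightarrow> finite V \<and> (\<forall>u v. E u v \<longrightarrow> u \<in> V \<and> v \<in> V \<and> u \<noteq> v)"

definition outdeg :: "'a set \<Rightarrow> ('a \<Rightarrow> 'a \<Rightarrow> bool) \<Rightarrow> 'a \<Rightarrow> nat" where
  "outdeg V E v = card {u \<in> V. E v u}"

definition indeg :: "'a set \<Rightarrow> ('a \<Rightarrow> 'a \<Rightarrow> bool) \<Rightarrow> 'a \<Rightarrow> nat" where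
  "indeg V E v = card {u \<in> V. E u v}"

definition min_semideg_ge :: "'a set \<Rightarrow> ('a \<Rightarrow> 'a \<Rightarrow> bool) \<Rightarrow> int \<Rightarrow> bool" where
  "min_semideg_ge V E d \<longleftrightarrow> (\<forall>v\<in>V. d \<le> int (outdeg V E v) \<and> d \<le> int (indeg V E v))"

definition succ_idx :: "'a list \<Rightarrow> nat \<Rightarrow> 'a" where
  "succ_idx C i = C ! ((i + 1) mod length C)"

definition is_cycle :: "'a set \<Rightarrow> ('a \<Rightarrow> 'a \<Rightarrow> bool) \<Rightarrow> 'a list \<Rightarrow> bool" where
  "is_cycle V E C \<longleftrightarrow> 2 \<le> length C \<and> distinct C \<and> set C \<subseteq> V \<and>
     (\<forall>i < length C. E (C ! i) (succ_idx C i))"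

text \<open>An S-cycle: a directed cycle encountering s_1,...,s_k in this (cyclic) order.\<close>
definition is_S_cycle :: "'a set \<Rightarrow> ('a \<Rightarrow> 'a \<Rightarrow> bool) \<Rightarrow> 'a list \<Rightarrow> 'a list \<Rightarrow> bool" where
  "is_S_cycle V E S C \<longleftrightarrow> is_cycle V E C \<and> (\<exists>r. subseq S (rotate r C))"

definition longest_S_cycle :: "'a set \<Rightarrow> ('a \<Rightarrow> 'a \<Rightarrow> bool) \<Rightarrow> 'a list \<Rightarrow> 'a list \<Rightarrow> bool" where
  "longest_S_cycle V E S C \<longleftrightarrow> is_S_cycle V E S C \<and>
     (\<forall>C'. is_S_cycle V E S C' \<longrightarrow> length C' \<le> length C)"

end

theory Submission imports Defs begin

text \<open>If some vertex of \<open>C\<close> sent an edge into \<open>H\<close> while its successor received one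
  from \<open>H\<close>, a path inside \<open>H\<close> between the two ends could be spliced into \<open>C\<close>, giving a
  longer \<open>S\<close>-cycle. So it suffices to show that \<open>H\<close> is strongly connected. For \<open>p\<close> reaching
  \<open>q\<close> in \<open>H\<close>, count the in-neighbours of \<open>p\<close> and the out-neighbours of \<open>q\<close>: inside \<open>H\<close>
  they lie among the ancestors of \<open>p\<close> and the descendants of \<open>q\<close>; on \<open>C\<close>, no position can
  both send an edge to an ancestor and have its successor receive one from a descendant.
  The semi-degree bound then gives \<open>|H| + k \<le> |anc p| + |desc q|\<close>, which forces ancestors
  and descendants to overlap, and hence strong connectivity.\<close>

lemma cycle_edges_iff_successively:
  assumes "C \<noteq> []"
  shows "(\<forall>i<length C. E (C!i) (succ_idx C i)) \<longleftrightarrow> successively E C \<and> E (last C) (hd C)"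
proof
  assume edges: "\<forall>i<length C. E (C!i) (succ_idx C i)"
  have "successively E C"
    unfolding successively_conv_nth
  proof (intro allI impI)
    fix i assume "Suc i < length C"
    then show "E (C ! i) (C ! Suc i)" using edges[rule_format, of i] by (simp add: succ_idx_def)
  qed
  moreover have "E (last C) (hd C)"
    using edges[rule_format, of "length C - 1"] assms
    by (simp add: succ_idx_def last_conv_nth hd_conv_nth)
  ultimately show "successively E C \<and> E (last C) (hd C)" by simp
next
  assume path: "successively E C \<and> E (last C) (hd C)"
  show "\<forall>i<length C. E (C!i) (succ_idx C i)"
  proof (intro allI impI)
    fix i assume i: "i < length C"
    show "E (C!i) (succ_idx C i)"
    proof (cases "Suc i < length C")
      case True
      then show ?thesis using path successively_nth[of E C i] by (simp add: succ_idx_def)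
    next
      case False
      then have "i = length C - 1" "Suc i = length C" using i by simp_all
      then show ?thesis using path assms by (simp add: succ_idx_def last_conv_nth hd_conv_nth)
    qed
  qed
qed

lemma succ_idx_surj:
  assumes "x \<in> set C"
  shows "\<exists>j<length C. succ_idx C j = x"
proof -
  obtain i where i: "i < length C" "C ! i = x" using assms by (auto simp: in_set_conv_nth)
  show ?thesis
  proof (cases i)
    case 0
    then show ?thesis using i by (intro exI[of _ "length C - 1"]) (simp add: succ_idx_def)
  next
    case (Suc j)
    then show ?thesis using i by (intro exI[of _ j]) (simp add: succ_idx_def)
  qed
qed

lemma is_cycle_rotate:
  assumes "is_cycle V E C"
  shows "is_cycle V E (rotate q C)"
proof -
  have ne: "C \<noteq> []" using assms by (auto simp: is_cycle_def)
  have "\<forall>i<length (rotate q C). E (rotate q C ! i) (succ_idx (rotate q C) i)"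
  proof (intro allI impI)
    fix i assume i: "i < length (rotate q C)"
    let ?c = "length C"
    have "(q + (i + 1) mod ?c) mod ?c = ((q + i) mod ?c + 1) mod ?c"
      by (simp add: mod_add_right_eq mod_Suc_eq)
    then have "E (C ! ((q + i) mod ?c)) (C ! ((q + (i + 1) mod ?c) mod ?c))"
      using assms ne by (simp add: is_cycle_def succ_idx_def)
    then show "E (rotate q C ! i) (succ_idx (rotate q C) i)"
      using i ne by (simp add: succ_idx_def nth_rotate)
  qed
  then show ?thesis using assms by (simp add: is_cycle_def)
qed

lemma is_S_cycle_rotate:
  assumes "is_S_cycle V E S C"
  shows "is_S_cycle V E S (rotate q C)"
proof -
  obtain r where r: "subseq S (rotate r C)" using assms by (auto simp: is_S_cycle_def)
  have "rotate (r + length C * q - q) (rotate q C) = rotate r C"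
  proof (cases "C = []")
    case False
    then have "q \<le> length C * q" by (cases "length C") auto
    then have "r + length C * q - q + q = r + length C * q" by linarith
    then have "rotate (r + length C * q - q) (rotate q C) = rotate (r + length C * q) C"
      by (simp add: rotate_rotate)
    also have "\<dots> = rotate r C" by (metis mod_mult_self2 rotate_conv_mod)
    finally show ?thesis .
  qed simp
  then show ?thesis using assms r is_cycle_rotate by (metis is_S_cycle_def)
qed

lemma is_S_cycle_append_path:
  assumes "is_S_cycle V E S C" "P \<noteq> []" "distinct P" "set P \<subseteq> V - set C"
    and "successively E P" "E (last C) (hd P)" "E (last P) (hd C)"
  shows "is_S_cycle V E S (C @ P)"
proof -
  have cyc: "is_cycle V E C" using assms(1) by (simp add: is_S_cycle_def)
  then have ne: "C \<noteq> []" by (auto simp: is_cycle_def)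
  have "successively E C \<and> E (last C) (hd C)"
    using cyc cycle_edges_iff_successively[OF ne] by (simp add: is_cycle_def)
  then have "successively E (C @ P) \<and> E (last (C @ P)) (hd (C @ P))"
    using assms ne by (simp add: successively_append_iff)
  then have cyc': "is_cycle V E (C @ P)"
    using cycle_edges_iff_successively[of "C @ P" E] cyc assms by (auto simp: is_cycle_def)
  obtain r where r: "subseq S (rotate r C)" using assms(1) by (auto simp: is_S_cycle_def)
  define r0 where "r0 = r mod length C"
  have r0: "r0 < length C" using ne by (simp add: r0_def)
  have "rotate r C = drop r0 C @ take r0 C"
    by (simp add: rotate_drop_take r0_def)
  moreover have "rotate r0 (C @ P) = drop r0 C @ P @ take r0 C"
    using r0 by (simp add: rotate_drop_take)
  moreover have "subseq (drop r0 C @ take r0 C) (drop r0 C @ P @ take r0 C)"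
    by (intro list_emb_append_mono list_emb_append2) simp_all
  ultimately have "subseq S (rotate r0 (C @ P))"
    using r by (metis subseq_order.trans)
  then show ?thesis using cyc' by (auto simp: is_S_cycle_def)
qed

lemma rtranclp_imp_distinct_path:
  assumes "R\<^sup>*\<^sup>* u v" "Q v" "\<And>a b. R a b \<Longrightarrow> Q a"
  shows "\<exists>P. P \<noteq> [] \<and> hd P = u \<and> last P = v \<and> distinct P \<and> successively R P \<and> set P \<subseteq> Collect Q"
  using assms(1)
proof (induction rule: converse_rtranclp_induct)
  case base
  then show ?case using assms(2) by (intro exI[of _ "[v]"]) auto
next
  case (step u w)
  then obtain P where P: "P \<noteq> []" "hd P = w" "last P = v" "distinct P" "successively R P"
      "set P \<subseteq> Collect Q"
    by blast
  show ?case
  proof (cases "u \<in> set P")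
    case True
    then obtain xs ys where eq: "P = xs @ u # ys" by (meson split_list)
    then have "successively R (u # ys)" using P(5) by (simp add: successively_append_iff)
    then show ?thesis using P eq by (intro exI[of _ "u # ys"]) auto
  next
    case False
    then show ?thesis using P step assms(3)
      by (intro exI[of _ "u # P"]) (auto simp: successively_Cons)
  qed
qed

locale longest_S_cycle_digraph =
  fixes V :: "'a set" and E :: "'a \<Rightarrow> 'a \<Rightarrow> bool" and S C :: "'a list"
  assumes digraph: "digraph V E"
    and longest: "longest_S_cycle V E S C"
begin

definition H :: "'a set" where "H = V - set C"

definition E_H :: "'a \<Rightarrow> 'a \<Rightarrow> bool" where "E_H a b \<longleftrightarrow> E a b \<and> a \<in> H \<and> b \<in> H"

lemma finite_H: "finite H"
  using digraph by (simp add: digraph_def H_def)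

lemma is_cycle_C: "is_cycle V E C"
  using longest by (simp add: longest_S_cycle_def is_S_cycle_def)

lemma card_V_eq: "card V = length C + card H"
proof -
  have "set C \<subseteq> V" "finite V" "card (set C) = length C"
    using is_cycle_C digraph by (auto simp: is_cycle_def digraph_def distinct_card)
  then have "length C \<le> card V" by (metis card_mono)
  with \<open>set C \<subseteq> V\<close> \<open>card (set C) = length C\<close> show ?thesis
    unfolding H_def by (simp add: card_Diff_subset)
qed

lemma no_detour:
  assumes j: "j < length C" and path: "E_H\<^sup>*\<^sup>* v u" "u \<in> H"
    and "E (C!j) v" "E u (succ_idx C j)"
  shows False
proof -
  obtain P where P: "P \<noteq> []" "hd P = v" "last P = u" "distinct P" "successively E_H P" "set P \<subseteq> H"
    using rtranclp_imp_distinct_path[of E_H v u "\<lambda>x. x \<in> H"] path by (auto simp: E_H_def)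
  define C' where "C' = rotate (Suc j) C"
  have ne: "C \<noteq> []" using j by auto
  have "hd C' = succ_idx C j"
    unfolding C'_def succ_idx_def using hd_rotate_conv_nth[OF ne, of "Suc j"] by simp
  moreover have "last C' = C!j"
  proof -
    have "Suc j + (length C - 1) = j + length C" using j by simp
    then have "(Suc j + (length C - 1)) mod length C = j" using j by simp
    then show ?thesis unfolding C'_def using ne by (simp add: last_conv_nth nth_rotate del: rotate_Suc)
  qed
  moreover have "successively E P"
    using P(5) by (rule successively_mono) (auto simp: E_H_def)
  moreover have "is_S_cycle V E S C'"
    using longest is_S_cycle_rotate unfolding C'_def longest_S_cycle_def by blast
  moreover have "set P \<subseteq> V - set C'" using P(6) by (simp add: H_def C'_def)
  ultimately have "is_S_cycle V E S (C' @ P)"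
    using is_S_cycle_append_path[of V E S C' P] P assms by metis
  then have "length (C' @ P) \<le> length C" using longest unfolding longest_S_cycle_def by blast
  then show False using P(1) by (simp add: C'_def)
qed

definition ancestors :: "'a \<Rightarrow> 'a set" where "ancestors p = {v \<in> H. E_H\<^sup>*\<^sup>* v p}"

definition descendants :: "'a \<Rightarrow> 'a set" where "descendants q = {u \<in> H. E_H\<^sup>*\<^sup>* q u}"

definition in_idx :: "'a set \<Rightarrow> nat set" where
  "in_idx L = {j. j < length C \<and> (\<exists>v\<in>L. E (C!j) v)}"

definition out_idx :: "'a set \<Rightarrow> nat set" where
  "out_idx R = {j. j < length C \<and> (\<exists>u\<in>R. E u (succ_idx C j))}"

lemma card_in_idx_out_idx_le:
  assumes "E_H\<^sup>*\<^sup>* p q"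
  shows "card (in_idx (ancestors p)) + card (out_idx (descendants q)) \<le> length C"
proof -
  have "in_idx (ancestors p) \<inter> out_idx (descendants q) = {}"
  proof (rule ccontr)
    assume "in_idx (ancestors p) \<inter> out_idx (descendants q) \<noteq> {}"
    then obtain j v u where "j < length C" "E (C!j) v" "E u (succ_idx C j)" "u \<in> H"
        "E_H\<^sup>*\<^sup>* v p" "E_H\<^sup>*\<^sup>* q u"
      unfolding in_idx_def out_idx_def ancestors_def descendants_def by blast
    then show False using assms no_detour by (meson rtranclp_trans)
  qed
  then have "card (in_idx (ancestors p)) + card (out_idx (descendants q))
      = card (in_idx (ancestors p) \<union> out_idx (descendants q))"
    by (intro card_Un_disjoint[symmetric]) (auto simp: in_idx_def out_idx_def)
  also have "\<dots> \<le> card {..<length C}"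
    by (intro card_mono) (auto simp: in_idx_def out_idx_def)
  finally show ?thesis by simp
qed

lemma indeg_le_ancestors:
  assumes "p \<in> H"
  shows "indeg V E p + 1 \<le> card (ancestors p) + card (in_idx (ancestors p))"
proof -
  let ?A = "ancestors p"
  have fin: "finite ?A" "finite (in_idx ?A)"
    using finite_H by (auto simp: ancestors_def in_idx_def)
  have p: "p \<in> ?A" using assms by (simp add: ancestors_def)
  have "{a \<in> V. E a p} \<subseteq> (?A - {p}) \<union> (\<lambda>j. C!j) ` in_idx ?A"
  proof
    fix a assume a: "a \<in> {a \<in> V. E a p}"
    then have "a \<noteq> p" using digraph by (auto simp: digraph_def)
    show "a \<in> (?A - {p}) \<union> (\<lambda>j. C!j) ` in_idx ?A"
    proof (cases "a \<in> set C")
      case True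
      then obtain j where j: "j < length C" "C!j = a" by (auto simp: in_set_conv_nth)
      then have "j \<in> in_idx ?A" using a p unfolding in_idx_def by blast
      then show ?thesis using j(2) by blast
    next
      case False
      then have "E_H a p" using a assms by (simp add: H_def E_H_def)
      then have "a \<in> ?A" by (auto simp: ancestors_def E_H_def dest: r_into_rtranclp[of E_H])
      then show ?thesis using \<open>a \<noteq> p\<close> by blast
    qed
  qed
  then have "indeg V E p \<le> card ((?A - {p}) \<union> (\<lambda>j. C!j) ` in_idx ?A)"
    unfolding indeg_def using fin by (intro card_mono) auto
  also have "\<dots> \<le> card (?A - {p}) + card ((\<lambda>j. C!j) ` in_idx ?A)" by (rule card_Un_le)
  also have "\<dots> \<le> card (?A - {p}) + card (in_idx ?A)"
    using card_image_le[OF fin(2)] by simp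
  finally have "indeg V E p \<le> card ?A - 1 + card (in_idx ?A)"
    using p fin by simp
  moreover have "0 < card ?A" using p fin card_gt_0_iff by blast
  ultimately show ?thesis by linarith
qed

lemma outdeg_le_descendants:
  assumes "q \<in> H"
  shows "outdeg V E q + 1 \<le> card (descendants q) + card (out_idx (descendants q))"
proof -
  let ?D = "descendants q"
  have fin: "finite ?D" "finite (out_idx ?D)"
    using finite_H by (auto simp: descendants_def out_idx_def)
  have q: "q \<in> ?D" using assms by (simp add: descendants_def)
  have "{a \<in> V. E q a} \<subseteq> (?D - {q}) \<union> succ_idx C ` out_idx ?D"
  proof
    fix a assume a: "a \<in> {a \<in> V. E q a}"
    then have "a \<noteq> q" using digraph by (auto simp: digraph_def)
    show "a \<in> (?D - {q}) \<union> succ_idx C ` out_idx ?D"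
    proof (cases "a \<in> set C")
      case True
      then obtain j where j: "j < length C" "succ_idx C j = a" using succ_idx_surj[of a C] by auto
      then have "j \<in> out_idx ?D" using a q unfolding out_idx_def by blast
      then show ?thesis using j(2) by blast
    next
      case False
      then have "E_H q a" using a assms by (simp add: H_def E_H_def)
      then have "a \<in> ?D" by (auto simp: descendants_def E_H_def dest: r_into_rtranclp[of E_H])
      then show ?thesis using \<open>a \<noteq> q\<close> by blast
    qed
  qed
  then have "outdeg V E q \<le> card ((?D - {q}) \<union> succ_idx C ` out_idx ?D)"
    unfolding outdeg_def using fin by (intro card_mono) auto
  also have "\<dots> \<le> card (?D - {q}) + card (succ_idx C ` out_idx ?D)" by (rule card_Un_le)
  also have "\<dots> \<le> card (?D - {q}) + card (out_idx ?D)"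
    using card_image_le[OF fin(2)] by simp
  finally have "outdeg V E q \<le> card ?D - 1 + card (out_idx ?D)"
    using q fin by simp
  moreover have "0 < card ?D" using q fin card_gt_0_iff by blast
  ultimately show ?thesis by linarith
qed

end

lemma le_two_ceiling_half: "int m \<le> 2 * \<lceil>real m / 2\<rceil>"
proof -
  have "real m / 2 \<le> of_int \<lceil>real m / 2\<rceil>" by (rule le_of_int_ceiling)
  then show ?thesis by linarith
qed

locale dense_longest_S_cycle = longest_S_cycle_digraph +
  fixes k :: nat
  assumes k_pos: "0 < k"
    and semideg: "min_semideg_ge V E (\<lceil>(real (card V) + real k) / 2\<rceil> - 1)"
begin

lemma card_ancestors_descendants:
  assumes "p \<in> H" "q \<in> H" "E_H\<^sup>*\<^sup>* p q"
  shows "card H + k \<le> card (ancestors p) + card (descendants q)"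
proof -
  define d where "d = \<lceil>(real (card V) + real k) / 2\<rceil>"
  have "p \<in> V" "q \<in> V" using assms by (auto simp: H_def)
  then have "d - 1 \<le> int (indeg V E p)" "d - 1 \<le> int (outdeg V E q)"
    using semideg by (auto simp: min_semideg_ge_def d_def)
  moreover have "int (card V + k) \<le> 2 * d"
    using le_two_ceiling_half[of "card V + k"] by (simp add: d_def)
  ultimately have "card V + k \<le> indeg V E p + outdeg V E q + 2" by linarith
  then show ?thesis
    using indeg_le_ancestors[OF assms(1)] outdeg_le_descendants[OF assms(2)]
      card_in_idx_out_idx_le[OF assms(3)] card_V_eq by linarith
qed

lemma card_disjoint_le_H:
  assumes "A \<subseteq> H" "B \<subseteq> H" "A \<inter> B = {}"
  shows "card A + card B \<le> card H"
  using assms finite_H by (metis card_Un_disjoint card_mono finite_subset le_sup_iff)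

lemma reaches_sym:
  assumes "p \<in> H" "q \<in> H" "E_H\<^sup>*\<^sup>* p q"
  shows "E_H\<^sup>*\<^sup>* q p"
proof (rule ccontr)
  assume "\<not> E_H\<^sup>*\<^sup>* q p"
  then have "ancestors p \<inter> descendants q = {}"
    unfolding ancestors_def descendants_def by (auto intro: rtranclp_trans)
  then have "card (ancestors p) + card (descendants q) \<le> card H"
    by (intro card_disjoint_le_H) (auto simp: ancestors_def descendants_def)
  then show False using card_ancestors_descendants[OF assms] k_pos by simp
qed

lemma card_descendants_ge:
  assumes "p \<in> H"
  shows "card H + k \<le> 2 * card (descendants p)"
proof -
  have "ancestors p \<subseteq> descendants p"
    using reaches_sym assms by (auto simp: ancestors_def descendants_def)
  then have "card (ancestors p) \<le> card (descendants p)"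
    using finite_H by (intro card_mono) (auto simp: descendants_def)
  then show ?thesis using card_ancestors_descendants[OF assms assms] by simp
qed

lemma H_strongly_connected:
  assumes "p \<in> H" "q \<in> H"
  shows "E_H\<^sup>*\<^sup>* p q"
proof -
  have "descendants p \<inter> descendants q \<noteq> {}"
  proof
    assume "descendants p \<inter> descendants q = {}"
    then have "card (descendants p) + card (descendants q) \<le> card H"
      by (intro card_disjoint_le_H) (auto simp: descendants_def)
    then show False
      using card_descendants_ge[OF assms(1)] card_descendants_ge[OF assms(2)] k_pos by linarith
  qed
  then obtain w where "w \<in> H" "E_H\<^sup>*\<^sup>* p w" "E_H\<^sup>*\<^sup>* q w" by (auto simp: descendants_def)
  then show ?thesis using reaches_sym[OF assms(2)] by (meson rtranclp_trans)
qed

end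

theorem corollary7:
  fixes V :: "'a set" and E :: "'a \<Rightarrow> 'a \<Rightarrow> bool" and S C :: "'a list" and k n :: nat
  assumes "digraph V E"
    and "n = card V"
    and "k \<ge> 3"
    and "min_semideg_ge V E (\<lceil>(real n + real k) / 2\<rceil> - 1)"
    and "length S = k" and "distinct S" and "set S \<subseteq> V"
    and "longest_S_cycle V E S C"
    and "set C \<noteq> V"
    and "F = {x \<in> set C. \<exists>h \<in> V - set C. E h x}"
    and "T = {x \<in> set C. \<exists>h \<in> V - set C. E x h}"
  shows "\<forall>i < length C. C ! i \<in> T \<longrightarrow> succ_idx C i \<notin> F"
proof (intro allI impI)
  fix i assume i: "i < length C" and "C ! i \<in> T"
  interpret dense_longest_S_cycle V E S C k
    using assms by unfold_locales auto
  obtain h where h: "h \<in> H" "E (C!i) h" using \<open>C ! i \<in> T\<close> assms(11) by (auto simp: H_def)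
  show "succ_idx C i \<notin> F"
  proof
    assume "succ_idx C i \<in> F"
    then obtain h' where "h' \<in> H" "E h' (succ_idx C i)" using assms(10) by (auto simp: H_def)
    then show False using no_detour[OF i H_strongly_connected[OF h(1)]] h by blast
  qed
qed

end
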